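(* Assume $\gamma:=\sum_{k,m\ge1}p_kp_m\gamma_{k,m}<\infty$. Then the quantity \[ v=1-\frac2\gamma\,\mathbb{E}\Big(\xi_0\frac{\mathcal C(\mathbf{T}_0^* )}{\mathcal C(\mathbf{T})}\Big) \] is strictly positive.
   Context: Let $(p_j)_{j\ge 0}$ be an offspring distribution with $p_0=0$ and $\mu:=\sum_{j\ge1} j p_j\in(1,\infty)$. For a vertex $x$ of a tree, its index is $\hat\iota(x)=\deg(x)-1$. For every unordered pair $\{k,m\}$ of positive integers let $\tilde\mu_{k,m}=\tilde\mu_{m,k}$ be a probability law on $(0,\infty)$ with mean $\gamma_{k,m}\in(0,\infty]$. The augmented weighted Galton--Watson tree (law $\mathbb{P}$, expectation $\mathbb{E}$) is constructed as follows: choose $k\ge1$ with probability $p_k$; the root $\mathbf{o}$ has $k+1$ neighbours $w_0,\dots,w_k$ joined by edges $\ell_0,\dots,\ell_k$; each $w_j$ is the root of an independent Galton--Watson tree $\mathbf{T}_j$ with offspring law $(p_j)$ (so every non-root vertex has index equal to its number of children). Conditionally on the tree, the conductances $\xi(e)>0$ are independent, an edge joining vertices of indices $k$ and $m$ having law $\tilde\mu_{k,m}$. Write $\xi_0=\xi(\ell_0)$. $\mathcal C(\cdot)$ denotes the effective conductance from the root to infinity of a weighted rooted tree; $\mathbf{T}_0^*$ denotes $\mathbf{T}_0$ (rooted at $w_0$) together with the edge $\ell_0$, rooted at $\mathbf{o}$. (This $v$ is the almost sure limit of $|X_n|/n$ for the random walk started at $\mathbf{o}$ jumping from $x$ to neighbour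 $y$ with probability $\xi(x,y)/\sum_{z\sim x}\xi(x,z)$.) *)

theory Defs
  imports "HOL-Probability.Probability"
begin

text \<open>
Vertices of the augmented Galton--Watson tree are encoded as lists of natural numbers
(Ulam--Harris labels, written in reverse: the child number i of vertex x is i # x). An offspring field N : nat list => nat is sampled i.i.d. with law p.
The root has N [] + 1 children w_0 = [0], ..., w_k = [k] (so its index is k = N []),
and every non-root vertex x has N x children (so its index is N x).
\<close>

definition nchild :: "(nat list \<Rightarrow> nat) \<Rightarrow> nat list \<Rightarrow> nat" where
  "nchild N x = (if x = [] then Suc (N []) else N x)"

text \<open>Conductances: for every vertex x and every pair (k,m) an independent variable
Xi x k m with law mu k m is sampled; the edge from the parent x to its child i # x
(indices N x and N (i # x)) gets conductance Xi (i # x) (N x) (N (i # x)).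
Conditionally on the tree these are independent with the required laws.\<close>

fun cond_edge :: "(nat list \<Rightarrow> nat) \<Rightarrow> (nat list \<Rightarrow> nat \<Rightarrow> nat \<Rightarrow> real) \<Rightarrow> nat list \<Rightarrow> real" where
  "cond_edge N Xi [] = 0"
| "cond_edge N Xi (i # x) = Xi (i # x) (N x) (N (i # x))"

text \<open>Series composition of two conductances (with 1/0 = infinity, 1/infinity = 0).\<close>
definition ser :: "ennreal \<Rightarrow> ennreal \<Rightarrow> ennreal" where
  "ser a b = inverse (inverse a + inverse b)"

text \<open>Effective conductance from vertex x to the vertices n generations below x
(those vertices shorted together), within the subtree of x.\<close>
primrec cond_level :: "(nat list \<Rightarrow> nat) \<Rightarrow> (nat list \<Rightarrow> nat \<Rightarrow> nat \<Rightarrow> real) \<Rightarrow> nat \<Rightarrow> nat list \<Rightarrow> ennreal" where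
  "cond_level N Xi 0 x = \<top>"
| "cond_level N Xi (Suc n) x =
     (\<Sum>i<nchild N x. ser (ennreal (cond_edge N Xi (i # x))) (cond_level N Xi n (i # x)))"

definition eff_cond :: "(nat list \<Rightarrow> nat) \<Rightarrow> (nat list \<Rightarrow> nat \<Rightarrow> nat \<Rightarrow> real) \<Rightarrow> nat list \<Rightarrow> ennreal" where
  "eff_cond N Xi x = (INF n. cond_level N Xi n x)"

definition C_T :: "(nat list \<Rightarrow> nat) \<Rightarrow> (nat list \<Rightarrow> nat \<Rightarrow> nat \<Rightarrow> real) \<Rightarrow> ennreal" where
  "C_T N Xi = eff_cond N Xi []"

definition xi0 :: "(nat list \<Rightarrow> nat) \<Rightarrow> (nat list \<Rightarrow> nat \<Rightarrow> nat \<Rightarrow> real) \<Rightarrow> real" where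
  "xi0 N Xi = cond_edge N Xi [0]"

text \<open>C(T_0^*): T_0 (rooted at w_0) plus the edge l_0, rooted at the root.\<close>
definition C_T0star :: "(nat list \<Rightarrow> nat) \<Rightarrow> (nat list \<Rightarrow> nat \<Rightarrow> nat \<Rightarrow> real) \<Rightarrow> ennreal" where
  "C_T0star N Xi = ser (ennreal (xi0 N Xi)) (eff_cond N Xi [0])"

text \<open>Laws mu k m are only relevant for k, m >= 1; fill the rest with a dummy law.\<close>
definition mu_ext :: "(nat \<Rightarrow> nat \<Rightarrow> real measure) \<Rightarrow> nat \<Rightarrow> nat \<Rightarrow> real measure" where
  "mu_ext \<mu> k m = (if 1 \<le> k \<and> 1 \<le> m then \<mu> k m else return borel 1)"

definition gw_space :: "nat pmf \<Rightarrow> (nat \<Rightarrow> nat \<Rightarrow> real measure)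
    \<Rightarrow> ((nat list \<Rightarrow> nat) \<times> (nat list \<Rightarrow> nat \<Rightarrow> nat \<Rightarrow> real)) measure" where
  "gw_space p \<mu> =
     (\<Pi>\<^sub>M x\<in>UNIV. measure_pmf p) \<Otimes>\<^sub>M
     (\<Pi>\<^sub>M x\<in>UNIV. \<Pi>\<^sub>M k\<in>UNIV. \<Pi>\<^sub>M m\<in>UNIV. mu_ext \<mu> k m)"

definition gamma_km :: "(nat \<Rightarrow> nat \<Rightarrow> real measure) \<Rightarrow> nat \<Rightarrow> nat \<Rightarrow> ennreal" where
  "gamma_km \<mu> k m = (\<integral>\<^sup>+ x. ennreal x \<partial>(\<mu> k m))"

definition gamma_tot :: "nat pmf \<Rightarrow> (nat \<Rightarrow> nat \<Rightarrow> real measure) \<Rightarrow> ennreal" where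
  "gamma_tot p \<mu> = (\<Sum>k. \<Sum>m. ennreal (pmf p (Suc k) * pmf p (Suc m)) * gamma_km \<mu> (Suc k) (Suc m))"

definition key_expect :: "nat pmf \<Rightarrow> (nat \<Rightarrow> nat \<Rightarrow> real measure) \<Rightarrow> ennreal" where
  "key_expect p \<mu> = (\<integral>\<^sup>+ \<omega>. ennreal (xi0 (fst \<omega>) (snd \<omega>)) * C_T0star (fst \<omega>) (snd \<omega>)
                                / C_T (fst \<omega>) (snd \<omega>) \<partial>gw_space p \<mu>)"

definition speed_v :: "nat pmf \<Rightarrow> (nat \<Rightarrow> nat \<Rightarrow> real measure) \<Rightarrow> real" where
  "speed_v p \<mu> = 1 - 2 / enn2real (gamma_tot p \<mu>) * enn2real (key_expect p \<mu>)"

end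

theory Submission
  imports Defs
begin

text \<open>Write \<open>A = \<C>(T\<^sub>0)\<close> and \<open>B\<close> for the conductance to infinity through \<open>\<ell>\<^sub>1, \<dots>, \<ell>\<^sub>k\<close>,
  so that \<open>\<C>(T\<^sub>0\<^sup>*) = \<xi>\<^sub>0 \<oplus> A\<close> (series composition) and \<open>\<C>(T) = \<xi>\<^sub>0 \<oplus> A + B\<close>.
  Rerooting the tree at \<open>w\<^sub>0\<close> preserves its law, fixes \<open>\<xi>\<^sub>0\<close> and exchanges \<open>A\<close> and \<open>B\<close>; so the
  expectation in question does not change when \<open>A\<close> and \<open>B\<close> are exchanged in the integrand.
  Pointwise, the integrand and its exchanged version add up to at most \<open>\<xi>\<^sub>0\<close>, with equality
  only where exactly one of \<open>A\<close>, \<open>B\<close> vanishes. Since \<open>A\<close> and \<open>B\<close> are independent and equally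
  distributed, this cannot happen almost surely, so twice the expectation is \<open>< \<bbbE> \<xi>\<^sub>0 = \<gamma>\<close>.\<close>

section \<open>Extended nonnegative reals and series composition\<close>

lemma inverse_ennreal_antimono:
  fixes y y' :: ennreal
  assumes "y \<le> y'"
  shows "inverse y' \<le> inverse y"
proof (cases "y = 0 \<or> y' = top")
  case False
  with assms obtain r r' where "y = ennreal r" "y' = ennreal r'" "0 < r" "r \<le> r'"
    by (cases y rule: ennreal_cases; cases y' rule: ennreal_cases)
       (auto simp: top_unique ennreal_le_iff2)
  then show ?thesis
    by (simp add: inverse_ennreal ennreal_leI le_imp_inverse_le)
qed auto

lemma inverse_inverse_ennreal [simp]: "inverse (inverse (a::ennreal)) = a"
proof (cases a rule: ennreal_cases)
  case (real r)
  then show ?thesis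
    by (cases "r = 0") (auto simp: inverse_ennreal)
qed simp

lemma ser_0_right [simp]: "ser a 0 = 0"
  and ser_top_right [simp]: "ser a top = a"
  by (simp_all add: ser_def)

lemma ser_mono_right: "b \<le> b' \<Longrightarrow> ser a b \<le> ser a b'"
  unfolding ser_def by (intro inverse_ennreal_antimono add_left_mono)

lemma ser_le_left: "ser a b \<le> a"
  using ser_mono_right[of b top a] by simp

lemma ser_ennreal:
  assumes x: "0 < x" and r: "0 < r"
  shows "ser (ennreal x) (ennreal r) = ennreal (x * r / (x + r))"
proof -
  have "inverse (ennreal x) + inverse (ennreal r) = ennreal (inverse x + inverse r)"
    using x r by (simp add: inverse_ennreal ennreal_plus)
  then have "ser (ennreal x) (ennreal r) = inverse (ennreal (inverse x + inverse r))"
    by (simp add: ser_def)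
  also have "\<dots> = ennreal (inverse (inverse x + inverse r))"
    using x r by (intro inverse_ennreal add_pos_pos) auto
  also have "inverse (inverse x + inverse r) = x * r / (x + r)"
    using x r by (simp add: field_simps)
  finally show ?thesis .
qed

lemma continuous_on_ser: "continuous_on UNIV (ser a)"
  unfolding ser_def[abs_def]
  by (intro continuous_on_inverse_ennreal continuous_on_add_ennreal continuous_on_const continuous_on_id)

lemma tendsto_ser: "(f \<longlongrightarrow> l) F \<Longrightarrow> ((\<lambda>n. ser a (f n)) \<longlongrightarrow> ser a l) F"
  using continuous_on_tendsto_compose[OF continuous_on_ser, of f l F] by simp

lemma borel_measurable_ser [measurable]:
  "f \<in> borel_measurable M \<Longrightarrow> g \<in> borel_measurable M \<Longrightarrow> (\<lambda>\<omega>. ser (f \<omega>) (g \<omega>)) \<in> borel_measurable M"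
  unfolding ser_def by (intro borel_measurable_inverse_ennreal borel_measurable_add)

lemma one_sub_two_ratio_pos:
  fixes a g :: ennreal
  assumes lt: "a + a < g" and g: "g < top"
  shows "a < top \<and> 0 < 1 - 2 / enn2real g * enn2real a"
proof -
  have a: "a < top"
  proof -
    have "a \<le> a + a"
      by (rule add_increasing) simp_all
    also have "\<dots> < top"
      using lt g by (rule less_trans)
    finally show ?thesis .
  qed
  obtain e where e: "a = ennreal e" "0 \<le> e"
    using a by (cases a rule: ennreal_cases) auto
  obtain r where r: "g = ennreal r" "0 \<le> r"
    using g by (cases g rule: ennreal_cases) auto
  have "e + e < r"
    using lt e r by (simp add: ennreal_plus[symmetric] ennreal_less_iff del: ennreal_plus)
  then have "2 / r * e < 1"
    using e(2) by (simp add: divide_less_eq)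
  then show ?thesis
    using a e r by simp
qed


section \<open>The pointwise inequality\<close>

definition edge_share :: "real \<Rightarrow> ennreal \<Rightarrow> ennreal \<Rightarrow> ennreal" where
  "edge_share x a b = ennreal x * ser (ennreal x) a / (ser (ennreal x) a + b)"

lemma borel_measurable_edge_share [measurable]:
  "f \<in> borel_measurable M \<Longrightarrow> g \<in> borel_measurable M \<Longrightarrow> h \<in> borel_measurable M \<Longrightarrow>
   (\<lambda>\<omega>. edge_share (f \<omega>) (g \<omega>) (h \<omega>)) \<in> borel_measurable M"
  unfolding edge_share_def
  by (intro borel_measurable_divide_ennreal borel_measurable_times_ennreal borel_measurable_add
      borel_measurable_ser measurable_compose[OF _ measurable_ennreal])

lemma edge_share_0_left: "edge_share x 0 b = 0"
  by (simp add: edge_share_def)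

lemma edge_share_0_right: "a < top \<Longrightarrow> edge_share x a 0 \<le> ennreal x"
proof -
  assume "a < top"
  then have "ser (ennreal x) a < top"
    using ser_le_left[of "ennreal x" a] by (simp add: le_less_trans)
  then have "ser (ennreal x) a / ser (ennreal x) a \<le> 1"
    by (cases "ser (ennreal x) a = 0") auto
  then show ?thesis
    unfolding edge_share_def using mult_left_mono[of _ 1 "ennreal x"]
    by (simp add: ennreal_times_divide[symmetric])
qed

lemma edge_share_ennreal:
  fixes x a b :: real
  assumes x: "0 < x" and a: "0 < a" and b: "0 < b"
  shows "edge_share x (ennreal a) (ennreal b) = ennreal (x * x * a / (x * a + x * b + a * b))"
proof -
  define s where "s = x * a / (x + a)"
  have s: "0 < s"
    using x a by (simp add: s_def)
  have "ser (ennreal x) (ennreal a) = ennreal s"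
    using x a by (simp add: ser_ennreal s_def)
  then have "edge_share x (ennreal a) (ennreal b) = ennreal x * ennreal s / (ennreal s + ennreal b)"
    by (simp add: edge_share_def)
  also have "\<dots> = ennreal (x * s) / ennreal (s + b)"
    using x s b by (simp add: ennreal_mult ennreal_plus)
  also have "\<dots> = ennreal (x * s / (s + b))"
    using x s b by (intro divide_ennreal) auto
  also have "s + b = (x * a + x * b + a * b) / (x + a)"
    using x a by (simp add: s_def field_simps)
  then have "x * s / (s + b) = x * x * a / (x * a + x * b + a * b)"
    using x a by (simp add: s_def del: times_divide_eq_right add: divide_divide_times_eq)
  finally show ?thesis .
qed

text \<open>Exchanging the two branches at the root, the shares add up to
  \<open>x (xa + xb)/(xa + xb + ab)\<close>, which is \<open>< x\<close> unless exactly one of \<open>a\<close>, \<open>b\<close> vanishes.\<close>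

lemma edge_share_swap_less:
  assumes x: "0 < x" and a: "a < top" and b: "b < top" and ab: "a = 0 \<longleftrightarrow> b = 0"
  shows "edge_share x a b + edge_share x b a < ennreal x"
proof (cases "a = 0")
  case False
  with ab a b obtain ra rb where ab_eq: "a = ennreal ra" "b = ennreal rb" and ra: "0 < ra" and rb: "0 < rb"
    by (cases a rule: ennreal_cases; cases b rule: ennreal_cases) (auto simp: less_le)
  define D where "D = x * ra + x * rb + ra * rb"
  have D: "0 < D" and D': "x * rb + x * ra + rb * ra = D"
    using x ra rb by (simp_all add: D_def add_pos_pos algebra_simps)
  have "x * x * ra / D + x * x * rb / D < x"
    using x ra rb D by (simp add: add_divide_distrib[symmetric] divide_less_eq D_def algebra_simps)
  then show ?thesis
    using x ra rb D unfolding ab_eq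
    by (simp add: edge_share_ennreal D' ennreal_plus[symmetric] ennreal_lessI D_def[symmetric] del: ennreal_plus)
qed (use ab x in \<open>simp add: edge_share_0_left\<close>)

lemma edge_share_swap_le:
  assumes a: "a < top" and b: "b < top"
  shows "edge_share x a b + edge_share x b a \<le> ennreal x"
proof -
  consider "x \<le> 0" | "a = 0" | "b = 0" | "0 < x" "a = 0 \<longleftrightarrow> b = 0"
    by fastforce
  then show ?thesis
  proof cases
    case 1
    then show ?thesis by (simp add: edge_share_def ennreal_neg)
  next
    case 2
    then show ?thesis using edge_share_0_right[OF b] by (simp add: edge_share_0_left)
  next
    case 3
    then show ?thesis using edge_share_0_right[OF a] by (simp add: edge_share_0_left)
  next
    case 4
    then show ?thesis using edge_share_swap_less[OF _ a b] by (simp add: less_imp_le)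
  qed
qed


section \<open>Infinite products of probability spaces\<close>

lemma measurable_PiM_UNIV_I:
  assumes "\<And>i. (\<lambda>\<omega>. f \<omega> i) \<in> measurable N (M i)"
  shows "f \<in> measurable N (PiM UNIV M)"
proof -
  have "(\<lambda>\<omega>. \<lambda>i\<in>UNIV. f \<omega> i) \<in> measurable N (PiM UNIV M)"
    using assms by (intro measurable_restrict) auto
  moreover have "(\<lambda>\<omega>. \<lambda>i\<in>UNIV. f \<omega> i) = f"
    by (simp add: fun_eq_iff)
  ultimately show ?thesis by simp
qed

lemma PiM_coordinates_indep:
  assumes M: "\<And>i. i \<in> I \<Longrightarrow> prob_space (M i)" and I: "I \<noteq> {}"
  shows "prob_space.indep_vars (PiM I M) M (\<lambda>i \<omega>. \<omega> i) I"
proof -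
  interpret P: prob_space "PiM I M" by (intro prob_space_PiM M)
  have "distr (PiM I M) (PiM I M) (\<lambda>x. \<lambda>i\<in>I. x i) = distr (PiM I M) (PiM I M) (\<lambda>x. x)"
    by (intro distr_cong) (auto simp: space_PiM PiE_restrict)
  moreover have "PiM I (\<lambda>i. distr (PiM I M) (M i) (\<lambda>\<omega>. \<omega> i)) = PiM I M"
    using M by (intro PiM_cong refl distr_PiM_component) auto
  ultimately show ?thesis
    using I by (subst P.indep_vars_iff_distr_eq_PiM') (auto intro: measurable_component_singleton)
qed

lemma (in prob_space) distr_indep_vars_eq_PiM:
  assumes I: "I \<noteq> {}" and indep: "indep_vars N X I"
    and X: "\<And>i. i \<in> I \<Longrightarrow> distr M (N i) (X i) = N i"
  shows "distr M (PiM I N) (\<lambda>\<omega>. \<lambda>i\<in>I. X i \<omega>) = PiM I N"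
proof -
  have "random_variable (N i) (X i)" if "i \<in> I" for i
    using indep that by (auto simp: indep_vars_def)
  then have "distr M (PiM I N) (\<lambda>\<omega>. \<lambda>i\<in>I. X i \<omega>) = PiM I (\<lambda>i. distr M (N i) (X i))"
    using indep_vars_iff_distr_eq_PiM'[OF I] indep by blast
  also have "\<dots> = PiM I N"
    using X by (intro PiM_cong) auto
  finally show ?thesis .
qed

lemma distr_PiM_componentwise:
  assumes M: "\<And>i. i \<in> I \<Longrightarrow> prob_space (M i)" and I: "I \<noteq> {}"
    and h: "\<And>i. i \<in> I \<Longrightarrow> h i \<in> measurable (M i) (M i)"
    and h_preserving: "\<And>i. i \<in> I \<Longrightarrow> distr (M i) (M i) (h i) = M i"
  shows "distr (PiM I M) (PiM I M) (\<lambda>\<omega>. \<lambda>i\<in>I. h i (\<omega> i)) = PiM I M"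
proof -
  interpret P: prob_space "PiM I M" by (intro prob_space_PiM M)
  show ?thesis
  proof (rule P.distr_indep_vars_eq_PiM[OF I])
    show "P.indep_vars M (\<lambda>i \<omega>. h i (\<omega> i)) I"
      by (rule P.indep_vars_compose2[OF PiM_coordinates_indep[OF M I] h])
    fix i assume i: "i \<in> I"
    have "distr (PiM I M) (M i) (\<lambda>\<omega>. h i (\<omega> i)) = distr (distr (PiM I M) (M i) (\<lambda>\<omega>. \<omega> i)) (M i) (h i)"
      using i h by (simp add: distr_distr comp_def measurable_component_singleton)
    also have "\<dots> = M i"
      using i M by (simp add: distr_PiM_component h_preserving)
    finally show "distr (PiM I M) (M i) (\<lambda>\<omega>. h i (\<omega> i)) = M i" .
  qed
qed

lemma measurable_PiM_pair_component:
  "(k, m) \<in> I \<Longrightarrow> (\<lambda>\<omega>. \<omega> (k, m)) \<in> measurable (PiM I (\<lambda>(k, m). \<nu> k m)) (\<nu> k m)"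
  using measurable_component_singleton[of "(k, m)" I "\<lambda>(k, m). \<nu> k m"] by simp

lemma distr_PiM_curry:
  fixes \<nu> :: "'k \<Rightarrow> 'm \<Rightarrow> 'a measure"
  assumes \<nu>: "\<And>k m. prob_space (\<nu> k m)"
  shows "distr (PiM UNIV (\<lambda>(k, m). \<nu> k m)) (PiM UNIV (\<lambda>k. PiM UNIV (\<nu> k))) (\<lambda>w k m. w (k, m))
       = PiM UNIV (\<lambda>k. PiM UNIV (\<nu> k))"
proof -
  define P where "P = PiM UNIV (\<lambda>(k::'k, m::'m). \<nu> k m)"
  define row where "row k w = (\<lambda>m. w (k, m))" for k and w :: "'k \<times> 'm \<Rightarrow> 'a"
  interpret P: prob_space P
    unfolding P_def by (intro prob_space_PiM) (auto simp: \<nu>)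
  have "P.indep_vars (\<lambda>(k, m). \<nu> k m) (\<lambda>i \<omega>. \<omega> i) UNIV"
    unfolding P_def by (rule PiM_coordinates_indep) (auto simp: \<nu>)
  then have "P.indep_vars (\<lambda>k. PiM ({k} \<times> UNIV) (\<lambda>(k, m). \<nu> k m)) (\<lambda>k \<omega>. restrict \<omega> ({k} \<times> UNIV)) UNIV"
    using P.indep_vars_restrict[of _ _ UNIV UNIV "\<lambda>k. {k} \<times> UNIV"]
    by (auto simp: disjoint_family_on_def)
  moreover have "(\<lambda>z m. z (k, m)) \<in> measurable (PiM ({k} \<times> UNIV) (\<lambda>(k, m). \<nu> k m)) (PiM UNIV (\<nu> k))" for k
    by (intro measurable_PiM_UNIV_I measurable_PiM_pair_component) simp
  ultimately have "P.indep_vars (\<lambda>k. PiM UNIV (\<nu> k)) (\<lambda>k \<omega>. (\<lambda>z m. z (k, m)) (restrict \<omega> ({k} \<times> UNIV))) UNIV"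
    by (rule P.indep_vars_compose2)
  then have "P.indep_vars (\<lambda>k. PiM UNIV (\<nu> k)) row UNIV"
    by (simp add: row_def[abs_def])
  moreover have "distr P (PiM UNIV (\<nu> k)) (row k) = PiM UNIV (\<nu> k)" for k
  proof -
    have "(\<lambda>\<omega>. \<lambda>m\<in>UNIV. \<omega> (k, m)) = row k"
      by (simp add: fun_eq_iff row_def)
    then show ?thesis
      using distr_PiM_reindex[of UNIV "\<lambda>(k, m). \<nu> k m" "\<lambda>m. (k, m)" UNIV] \<nu>
      by (auto simp: P_def inj_on_def split: prod.splits)
  qed
  ultimately have "distr P (PiM UNIV (\<lambda>k. PiM UNIV (\<nu> k))) (\<lambda>\<omega>. \<lambda>k\<in>UNIV. row k \<omega>) = PiM UNIV (\<lambda>k. PiM UNIV (\<nu> k))"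
    by (intro P.distr_indep_vars_eq_PiM) auto
  moreover have "(\<lambda>\<omega>. \<lambda>k\<in>UNIV. row k \<omega>) = (\<lambda>w k m. w (k, m))"
    by (simp add: fun_eq_iff row_def)
  ultimately show ?thesis
    by (simp add: P_def)
qed

lemma measurable_transpose:
  fixes \<nu> :: "'k \<Rightarrow> 'k \<Rightarrow> 'a measure"
  assumes sym: "\<And>k m. \<nu> k m = \<nu> m k"
  shows "(\<lambda>Y k m. Y m k) \<in> measurable (PiM UNIV (\<lambda>k. PiM UNIV (\<nu> k))) (PiM UNIV (\<lambda>k. PiM UNIV (\<nu> k)))"
proof (intro measurable_PiM_UNIV_I)
  fix k m :: 'k
  have "(\<lambda>Y. Y m) \<in> measurable (PiM UNIV (\<lambda>k. PiM UNIV (\<nu> k))) (PiM UNIV (\<nu> m))"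
    by (rule measurable_component_singleton) simp
  moreover have "(\<lambda>Z. Z k) \<in> measurable (PiM UNIV (\<nu> m)) (\<nu> m k)"
    by (rule measurable_component_singleton) simp
  ultimately have "(\<lambda>Y. Y m k) \<in> measurable (PiM UNIV (\<lambda>k. PiM UNIV (\<nu> k))) (\<nu> m k)"
    by (rule measurable_compose)
  then show "(\<lambda>Y. Y m k) \<in> measurable (PiM UNIV (\<lambda>k. PiM UNIV (\<nu> k))) (\<nu> k m)"
    by (simp only: sym[of k m])
qed

text \<open>Transposition of the doubly indexed product is flipping the index pairs of the
  single product, conjugated by currying.\<close>

lemma distr_PiM_transpose:
  fixes \<nu> :: "'k \<Rightarrow> 'k \<Rightarrow> 'a measure"
  assumes \<nu>: "\<And>k m. prob_space (\<nu> k m)" and sym: "\<And>k m. \<nu> k m = \<nu> m k"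
  shows "distr (PiM UNIV (\<lambda>k. PiM UNIV (\<nu> k))) (PiM UNIV (\<lambda>k. PiM UNIV (\<nu> k))) (\<lambda>Y k m. Y m k)
       = PiM UNIV (\<lambda>k. PiM UNIV (\<nu> k))"
proof -
  define P where "P = PiM UNIV (\<lambda>(k::'k, m::'k). \<nu> k m)"
  define Q where "Q = PiM UNIV (\<lambda>k. PiM UNIV (\<nu> k))"
  define curry where "curry = (\<lambda>(w::'k \<times> 'k \<Rightarrow> 'a) k m. w (k, m))"
  define flip where "flip = (\<lambda>(w::'k \<times> 'k \<Rightarrow> 'a) i. w (prod.swap i))"
  define transp where "transp = (\<lambda>(Y::'k \<Rightarrow> 'k \<Rightarrow> 'a) k m. Y m k)"
  have curry_distr: "distr P Q curry = Q"
    unfolding P_def Q_def curry_def by (rule distr_PiM_curry[OF \<nu>])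
  have curry: "curry \<in> measurable P Q"
    unfolding curry_def P_def Q_def
    by (intro measurable_PiM_UNIV_I measurable_PiM_pair_component) auto
  have flip: "flip \<in> measurable P P"
    unfolding flip_def P_def
  proof (intro measurable_PiM_UNIV_I)
    fix i :: "'k \<times> 'k"
    show "(\<lambda>w. w (prod.swap i)) \<in> measurable (PiM UNIV (\<lambda>(k, m). \<nu> k m)) ((\<lambda>(k, m). \<nu> k m) i)"
      using measurable_PiM_pair_component[of "snd i" "fst i" UNIV \<nu>] sym[of "snd i" "fst i"]
      by (cases i) simp
  qed
  have flip_distr: "distr P P flip = P"
  proof -
    have "(\<lambda>w. \<lambda>i\<in>UNIV. w (prod.swap i)) = flip"
      by (simp add: flip_def fun_eq_iff)
    moreover have "PiM UNIV (\<lambda>i. (\<lambda>(k, m). \<nu> k m) (prod.swap i)) = P"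
      unfolding P_def by (intro PiM_cong refl) (auto simp: sym)
    ultimately show ?thesis
      using distr_PiM_reindex[of UNIV "\<lambda>(k, m). \<nu> k m" prod.swap UNIV] \<nu>
      by (auto simp: P_def split: prod.splits)
  qed
  have transp: "transp \<in> measurable Q Q"
    unfolding transp_def Q_def by (rule measurable_transpose[OF sym])
  have "transp \<circ> curry = curry \<circ> flip"
    by (simp add: transp_def curry_def flip_def fun_eq_iff)
  have "distr Q Q transp = distr (distr P Q curry) Q transp"
    by (simp only: curry_distr)
  also have "\<dots> = distr P Q (transp \<circ> curry)"
    by (rule distr_distr[OF transp curry])
  also have "\<dots> = distr P Q (curry \<circ> flip)"
    by (simp only: \<open>transp \<circ> curry = curry \<circ> flip\<close>)
  also have "\<dots> = distr (distr P P flip) Q curry"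
    by (rule distr_distr[OF curry flip, symmetric])
  also have "\<dots> = Q"
    by (simp only: flip_distr curry_distr)
  finally show ?thesis
    by (simp only: Q_def transp_def)
qed

lemma nn_integral_PiM_component:
  assumes M: "\<And>i. prob_space (M i)" and f: "f \<in> borel_measurable (M i)"
  shows "(\<integral>\<^sup>+\<omega>. f (\<omega> i) \<partial>PiM UNIV M) = (\<integral>\<^sup>+x. f x \<partial>M i)"
proof -
  have "distr (PiM UNIV M) (M i) (\<lambda>\<omega>. \<omega> i) = M i"
    using M by (intro distr_PiM_component) auto
  then show ?thesis
    using f nn_integral_distr[of "\<lambda>\<omega>. \<omega> i" "PiM UNIV M" "M i" f]
    by (simp add: measurable_component_singleton)
qed

lemma distr_PiM_two_components:
  assumes M: "\<And>i. i \<in> I \<Longrightarrow> prob_space (M i)" and ij: "i \<in> I" "j \<in> I" "i \<noteq> j"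
  shows "distr (PiM I M) (M i \<Otimes>\<^sub>M M j) (\<lambda>\<omega>. (\<omega> i, \<omega> j)) = M i \<Otimes>\<^sub>M M j"
proof -
  interpret P: prob_space "PiM I M" by (intro prob_space_PiM M)
  have "P.indep_var (PiM {i} M) (\<lambda>\<omega>. restrict \<omega> {i}) (PiM {j} M) (\<lambda>\<omega>. restrict \<omega> {j})"
    using P.indep_var_restrict[OF PiM_coordinates_indep[OF M], of "{i}" "{j}"] ij by auto
  then have "P.indep_var (M i) ((\<lambda>f. f i) \<circ> (\<lambda>\<omega>. restrict \<omega> {i})) (M j) ((\<lambda>f. f j) \<circ> (\<lambda>\<omega>. restrict \<omega> {j}))"
    by (rule P.indep_var_compose) (auto intro: measurable_component_singleton)
  then have "P.indep_var (M i) (\<lambda>\<omega>. \<omega> i) (M j) (\<lambda>\<omega>. \<omega> j)"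
    by (simp add: comp_def)
  then show ?thesis
    using ij M unfolding P.indep_var_distribution_eq by (simp add: distr_PiM_component)
qed

lemma PiM_factor_through_restrict:
  assumes M: "\<And>i. i \<in> I \<Longrightarrow> prob_space (M i)" and S: "S \<subseteq> I"
    and f: "f \<in> measurable (PiM I M) N"
    and f_local: "\<And>\<omega> \<omega>'. \<omega> \<in> space (PiM I M) \<Longrightarrow> \<omega>' \<in> space (PiM I M) \<Longrightarrow>
      (\<And>i. i \<in> S \<Longrightarrow> \<omega> i = \<omega>' i) \<Longrightarrow> f \<omega> = f \<omega>'"
  obtains f' where "f' \<in> measurable (PiM S M) N" "\<And>\<omega>. \<omega> \<in> space (PiM I M) \<Longrightarrow> f \<omega> = f' (restrict \<omega> S)"
proof -
  interpret P: prob_space "PiM I M" by (intro prob_space_PiM M)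
  obtain \<omega>\<^sub>0 where \<omega>\<^sub>0: "\<omega>\<^sub>0 \<in> space (PiM I M)"
    using P.not_empty by blast
  define extend where "extend y = (\<lambda>i\<in>I. if i \<in> S then y i else \<omega>\<^sub>0 i)" for y
  have extend: "extend \<in> measurable (PiM S M) (PiM I M)"
    unfolding extend_def
  proof (intro measurable_restrict)
    fix i assume "i \<in> I"
    then have "\<omega>\<^sub>0 i \<in> space (M i)"
      using \<omega>\<^sub>0 by (auto simp: space_PiM)
    then show "(\<lambda>y. if i \<in> S then y i else \<omega>\<^sub>0 i) \<in> measurable (PiM S M) (M i)"
      by (cases "i \<in> S") (simp_all add: measurable_component_singleton)
  qed
  show ?thesis
  proof
    show "f \<circ> extend \<in> measurable (PiM S M) N"
      using extend f by (rule measurable_comp)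
    fix \<omega> assume \<omega>: "\<omega> \<in> space (PiM I M)"
    then have "restrict \<omega> S \<in> space (PiM S M)"
      using measurable_space[OF measurable_restrict_subset[OF S]] by blast
    then show "f \<omega> = (f \<circ> extend) (restrict \<omega> S)"
      using \<omega> S measurable_space[OF extend] by (auto intro!: f_local simp: extend_def)
  qed
qed

lemma nn_integral_PiM_mult_disjoint:
  fixes f g :: "('i \<Rightarrow> 'a) \<Rightarrow> ennreal"
  assumes M: "\<And>i. i \<in> I \<Longrightarrow> prob_space (M i)" and I: "I \<noteq> {}"
    and S: "S \<subseteq> I" "S' \<subseteq> I" "S \<inter> S' = {}"
    and f: "f \<in> borel_measurable (PiM I M)" and g: "g \<in> borel_measurable (PiM I M)"
    and f_local: "\<And>\<omega> \<omega>'. \<omega> \<in> space (PiM I M) \<Longrightarrow> \<omega>' \<in> space (PiM I M) \<Longrightarrow>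
      (\<And>i. i \<in> S \<Longrightarrow> \<omega> i = \<omega>' i) \<Longrightarrow> f \<omega> = f \<omega>'"
    and g_local: "\<And>\<omega> \<omega>'. \<omega> \<in> space (PiM I M) \<Longrightarrow> \<omega>' \<in> space (PiM I M) \<Longrightarrow>
      (\<And>i. i \<in> S' \<Longrightarrow> \<omega> i = \<omega>' i) \<Longrightarrow> g \<omega> = g \<omega>'"
  shows "(\<integral>\<^sup>+\<omega>. f \<omega> * g \<omega> \<partial>PiM I M) = (\<integral>\<^sup>+\<omega>. f \<omega> \<partial>PiM I M) * (\<integral>\<^sup>+\<omega>. g \<omega> \<partial>PiM I M)"
proof -
  interpret P: prob_space "PiM I M" by (intro prob_space_PiM M)
  obtain f' where f': "f' \<in> borel_measurable (PiM S M)" and f_eq: "\<And>\<omega>. \<omega> \<in> space (PiM I M) \<Longrightarrow> f \<omega> = f' (restrict \<omega> S)"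
    using PiM_factor_through_restrict[OF M S(1) f f_local] by blast
  obtain g' where g': "g' \<in> borel_measurable (PiM S' M)" and g_eq: "\<And>\<omega>. \<omega> \<in> space (PiM I M) \<Longrightarrow> g \<omega> = g' (restrict \<omega> S')"
    using PiM_factor_through_restrict[OF M S(2) g g_local] by blast
  have restr: "(\<lambda>\<omega>. restrict \<omega> T) \<in> measurable (PiM I M) (PiM T M)" if "T \<subseteq> I" for T
    using that by (rule measurable_restrict_subset)
  define D where "D = distr (PiM I M) (PiM S M) (\<lambda>\<omega>. restrict \<omega> S)"
  define D' where "D' = distr (PiM I M) (PiM S' M) (\<lambda>\<omega>. restrict \<omega> S')"
  interpret D': prob_space D'
    unfolding D'_def by (rule P.prob_space_distr[OF restr[OF S(2)]])
  have "P.indep_var (PiM S M) (\<lambda>\<omega>. restrict \<omega> S) (PiM S' M) (\<lambda>\<omega>. restrict \<omega> S')"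
    using P.indep_var_restrict[OF PiM_coordinates_indep[OF M I] S(3,1,2)] by simp
  then have joint: "D \<Otimes>\<^sub>M D' = distr (PiM I M) (PiM S M \<Otimes>\<^sub>M PiM S' M) (\<lambda>\<omega>. (restrict \<omega> S, restrict \<omega> S'))"
    unfolding P.indep_var_distribution_eq D_def D'_def by simp
  have pair: "(\<lambda>\<omega>. (restrict \<omega> S, restrict \<omega> S')) \<in> measurable (PiM I M) (PiM S M \<Otimes>\<^sub>M PiM S' M)"
    using restr S by (intro measurable_Pair) auto
  have fg': "(\<lambda>z. f' (fst z) * g' (snd z)) \<in> borel_measurable (D \<Otimes>\<^sub>M D')"
    using f' g' by (simp add: joint)
  have "(\<integral>\<^sup>+\<omega>. f \<omega> * g \<omega> \<partial>PiM I M) = (\<integral>\<^sup>+\<omega>. f' (restrict \<omega> S) * g' (restrict \<omega> S') \<partial>PiM I M)"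
    by (intro nn_integral_cong) (simp add: f_eq g_eq)
  also have "\<dots> = (\<integral>\<^sup>+z. f' (fst z) * g' (snd z) \<partial>(D \<Otimes>\<^sub>M D'))"
    using fg' unfolding joint by (subst nn_integral_distr[OF pair]) auto
  also have "\<dots> = (\<integral>\<^sup>+u. f' u * (\<integral>\<^sup>+v. g' v \<partial>D') \<partial>D)"
    using D'.nn_integral_fst[OF fg'] g' by (simp add: nn_integral_cmult D'_def)
  also have "\<dots> = (\<integral>\<^sup>+u. f' u \<partial>D) * (\<integral>\<^sup>+v. g' v \<partial>D')"
    using f' by (intro nn_integral_multc) (simp add: D_def)
  also have "(\<integral>\<^sup>+u. f' u \<partial>D) = (\<integral>\<^sup>+\<omega>. f \<omega> \<partial>PiM I M)"
    unfolding D_def using f'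
    by (subst nn_integral_distr[OF restr[OF S(1)]]) (auto intro!: nn_integral_cong simp: f_eq)
  also have "(\<integral>\<^sup>+v. g' v \<partial>D') = (\<integral>\<^sup>+\<omega>. g \<omega> \<partial>PiM I M)"
    unfolding D'_def using g'
    by (subst nn_integral_distr[OF restr[OF S(2)]]) (auto intro!: nn_integral_cong simp: g_eq)
  finally show ?thesis .
qed


section \<open>Effective conductances of a weighted tree\<close>

lemma decseq_cond_level: "decseq (\<lambda>n. cond_level N Xi n x)"
proof (rule decseq_SucI)
  show "cond_level N Xi (Suc n) x \<le> cond_level N Xi n x" for n
  proof (induction n arbitrary: x)
    case (Suc n)
    show ?case
      unfolding cond_level.simps(2)[of N Xi "Suc n" x] cond_level.simps(2)[of N Xi n x]
      by (intro sum_mono ser_mono_right Suc)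
  qed simp
qed

lemma LIMSEQ_cond_level: "(\<lambda>n. cond_level N Xi n x) \<longlonglongrightarrow> eff_cond N Xi x"
  unfolding eff_cond_def using LIMSEQ_INF[OF decseq_cond_level] by simp

lemma eff_cond_unfold:
  "eff_cond N Xi x = (\<Sum>i<nchild N x. ser (ennreal (cond_edge N Xi (i # x))) (eff_cond N Xi (i # x)))"
proof (rule LIMSEQ_unique)
  show "(\<lambda>n. cond_level N Xi (Suc n) x) \<longlonglongrightarrow> eff_cond N Xi x"
    using LIMSEQ_cond_level LIMSEQ_Suc by blast
  show "(\<lambda>n. cond_level N Xi (Suc n) x) \<longlonglongrightarrow>
      (\<Sum>i<nchild N x. ser (ennreal (cond_edge N Xi (i # x))) (eff_cond N Xi (i # x)))"
    unfolding cond_level.simps by (intro tendsto_sum tendsto_ser LIMSEQ_cond_level)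
qed

lemma eff_cond_less_top: "eff_cond N Xi x < top"
proof -
  have "eff_cond N Xi x \<le> (\<Sum>i<nchild N x. ennreal (cond_edge N Xi (i # x)))"
    unfolding eff_cond_unfold[of N Xi x] by (intro sum_mono ser_le_left)
  also have "\<dots> < top" by simp
  finally show ?thesis .
qed

lemma cond_level_cong_subtree:
  assumes "x \<noteq> []" "\<And>ys. N (ys @ x) = N' (ys @ x)" "\<And>ys. Xi (ys @ x) = Xi' (ys @ x)"
  shows "cond_level N Xi n x = cond_level N' Xi' n x"
  using assms
proof (induction n arbitrary: x)
  case (Suc n)
  have "nchild N x = nchild N' x"
    using Suc.prems(1) Suc.prems(2)[of "[]"] by (simp add: nchild_def)
  moreover have "cond_edge N Xi (i # x) = cond_edge N' Xi' (i # x)" for i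
    using Suc.prems(2)[of "[]"] Suc.prems(2)[of "[i]"] Suc.prems(3)[of "[i]"] by simp
  moreover have "cond_level N Xi n (i # x) = cond_level N' Xi' n (i # x)" for i
    using Suc.prems(2)[of "_ @ [i]"] Suc.prems(3)[of "_ @ [i]"] by (intro Suc.IH) auto
  ultimately show ?case by (simp only: cond_level.simps)
qed simp

lemma eff_cond_cong_subtree:
  "x \<noteq> [] \<Longrightarrow> (\<And>ys. N (ys @ x) = N' (ys @ x)) \<Longrightarrow> (\<And>ys. Xi (ys @ x) = Xi' (ys @ x)) \<Longrightarrow>
   eff_cond N Xi x = eff_cond N' Xi' x"
  unfolding eff_cond_def using cond_level_cong_subtree[of x N N' Xi Xi'] by simp

definition cond_others :: "(nat list \<Rightarrow> nat) \<Rightarrow> (nat list \<Rightarrow> nat \<Rightarrow> nat \<Rightarrow> real) \<Rightarrow> ennreal" where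
  "cond_others N Xi = (\<Sum>i<N []. ser (ennreal (cond_edge N Xi [Suc i])) (eff_cond N Xi [Suc i]))"

lemma C_T0star_eq: "C_T0star N Xi = ser (ennreal (xi0 N Xi)) (eff_cond N Xi [0])"
  by (simp add: C_T0star_def)

lemma C_T_eq: "C_T N Xi = C_T0star N Xi + cond_others N Xi"
  unfolding C_T_def C_T0star_def cond_others_def xi0_def
  by (subst eff_cond_unfold) (simp add: nchild_def sum.lessThan_Suc_shift del: sum.lessThan_Suc)

lemma cond_others_less_top: "cond_others N Xi < top"
proof -
  have "cond_others N Xi \<le> (\<Sum>i<N []. ennreal (cond_edge N Xi [Suc i]))"
    unfolding cond_others_def by (intro sum_mono ser_le_left)
  also have "\<dots> < top" by simp
  finally show ?thesis .
qed

definition verts_T0 :: "nat list set" where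
  "verts_T0 = {ys @ [0] | ys. True}"

definition verts_others :: "nat list set" where
  "verts_others = {ys @ [Suc j] | ys j. True}"

lemma verts_T0_others_disjoint: "verts_T0 \<inter> verts_others = {}"
  by (auto simp: verts_T0_def verts_others_def)

lemma eff_cond_w0_cong:
  "(\<And>x. x \<in> verts_T0 \<Longrightarrow> N x = N' x) \<Longrightarrow> (\<And>x. x \<in> verts_T0 \<Longrightarrow> Xi x = Xi' x) \<Longrightarrow>
   eff_cond N Xi [0] = eff_cond N' Xi' [0]"
  by (rule eff_cond_cong_subtree) (auto simp: verts_T0_def)

lemma cond_others_cong:
  assumes "N [] = N' []" "\<And>x. x \<in> verts_others \<Longrightarrow> N x = N' x" "\<And>x. x \<in> verts_others \<Longrightarrow> Xi x = Xi' x"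
  shows "cond_others N Xi = cond_others N' Xi'"
proof -
  have "eff_cond N Xi [Suc i] = eff_cond N' Xi' [Suc i]" for i
    by (rule eff_cond_cong_subtree) (auto intro!: assms(2,3) simp: verts_others_def)
  moreover have "cond_edge N Xi [Suc i] = cond_edge N' Xi' [Suc i]" for i
    using assms(1) assms(2,3)[of "[Suc i]"] by (simp add: verts_others_def)
  ultimately show ?thesis
    unfolding cond_others_def assms(1) by simp
qed

lemma edge_share_eq_C_T:
  "edge_share (xi0 N Xi) (eff_cond N Xi [0]) (cond_others N Xi)
     = ennreal (xi0 N Xi) * C_T0star N Xi / C_T N Xi"
  by (simp add: edge_share_def C_T0star_eq C_T_eq)

locale random_weighted_tree =
  fixes M :: "'w measure"
    and NN :: "'w \<Rightarrow> nat list \<Rightarrow> nat"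
    and XX :: "'w \<Rightarrow> nat list \<Rightarrow> nat \<Rightarrow> nat \<Rightarrow> real"
  assumes measurable_NN: "\<And>x. (\<lambda>\<omega>. NN \<omega> x) \<in> measurable M (count_space UNIV)"
    and measurable_XX: "\<And>x k m. (\<lambda>\<omega>. XX \<omega> x k m) \<in> borel_measurable M"
begin

lemma measurable_nchild: "(\<lambda>\<omega>. nchild (NN \<omega>) x) \<in> measurable M (count_space UNIV)"
  unfolding nchild_def using measurable_NN by (cases "x = []") auto

lemma borel_measurable_cond_edge: "(\<lambda>\<omega>. cond_edge (NN \<omega>) (XX \<omega>) c) \<in> borel_measurable M"
proof (cases c)
  case (Cons i x)
  have "(\<lambda>\<omega>. XX \<omega> c k (NN \<omega> c)) \<in> borel_measurable M" for k
    by (rule measurable_compose_countable[where f="\<lambda>m \<omega>. XX \<omega> c k m", OF measurable_XX measurable_NN])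
  then have "(\<lambda>\<omega>. XX \<omega> c (NN \<omega> x) (NN \<omega> c)) \<in> borel_measurable M"
    by (rule measurable_compose_countable[where f="\<lambda>k \<omega>. XX \<omega> c k (NN \<omega> c)", OF _ measurable_NN])
  then show ?thesis
    using Cons by simp
qed simp

lemma borel_measurable_sum_nchild:
  assumes "\<And>i. h i \<in> borel_measurable M"
  shows "(\<lambda>\<omega>. \<Sum>i<nchild (NN \<omega>) x. h i \<omega> :: ennreal) \<in> borel_measurable M"
  using measurable_compose_countable[where f="\<lambda>k \<omega>. \<Sum>i<k. h i \<omega>", OF _ measurable_nchild] assms
  by auto

lemma borel_measurable_cond_level: "(\<lambda>\<omega>. cond_level (NN \<omega>) (XX \<omega>) n x) \<in> borel_measurable M"
proof (induction n arbitrary: x)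
  case (Suc n)
  show ?case
    unfolding cond_level.simps
    by (intro borel_measurable_sum_nchild borel_measurable_ser Suc
        measurable_compose[OF borel_measurable_cond_edge measurable_ennreal])
qed simp

lemma borel_measurable_eff_cond: "(\<lambda>\<omega>. eff_cond (NN \<omega>) (XX \<omega>) x) \<in> borel_measurable M"
  unfolding eff_cond_def using borel_measurable_cond_level by measurable

lemma borel_measurable_xi0: "(\<lambda>\<omega>. xi0 (NN \<omega>) (XX \<omega>)) \<in> borel_measurable M"
  unfolding xi0_def by (rule borel_measurable_cond_edge)

lemma borel_measurable_cond_others: "(\<lambda>\<omega>. cond_others (NN \<omega>) (XX \<omega>)) \<in> borel_measurable M"
proof -
  have "(\<lambda>\<omega>. \<Sum>i<k. ser (ennreal (cond_edge (NN \<omega>) (XX \<omega>) [Suc i])) (eff_cond (NN \<omega>) (XX \<omega>) [Suc i]))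
      \<in> borel_measurable M" for k
    by (intro borel_measurable_sum borel_measurable_ser borel_measurable_eff_cond
        measurable_compose[OF borel_measurable_cond_edge measurable_ennreal])
  then show ?thesis
    unfolding cond_others_def
    by (rule measurable_compose_countable[where g="\<lambda>\<omega>. NN \<omega> []", OF _ measurable_NN])
qed

end


section \<open>Rerooting at \<open>w\<^sub>0\<close>\<close>

text \<open>Rerooting at \<open>w\<^sub>0\<close> exchanges the root and \<open>w\<^sub>0\<close>, turns the child \<open>i\<close> of \<open>w\<^sub>0\<close> into the
  child \<open>i + 1\<close> of the new root and the child \<open>i + 1\<close> of the old root into the child \<open>i\<close> of
  the new \<open>w\<^sub>0\<close>; all deeper labels are carried along. On reversed (root-first) labels this is
  the involution reroot_rev. The edge \<open>\<ell>\<^sub>0\<close> keeps its label \<open>[0]\<close>, but the index pair of its endpoints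
  is reversed.\<close>

fun reroot_rev :: "nat list \<Rightarrow> nat list" where
  "reroot_rev [] = [0]"
| "reroot_rev [0] = []"
| "reroot_rev (0 # i # zs) = Suc i # zs"
| "reroot_rev (Suc j # zs) = 0 # j # zs"

lemma reroot_rev_involution [simp]: "reroot_rev (reroot_rev r) = r"
  by (induction r rule: reroot_rev.induct) auto

lemma reroot_rev_snoc: "r \<noteq> [] \<Longrightarrow> r \<noteq> [0] \<Longrightarrow> reroot_rev (r @ [i]) = reroot_rev r @ [i]"
  by (induction r rule: reroot_rev.induct) auto

definition reroot_label :: "nat list \<Rightarrow> nat list" where
  "reroot_label x = rev (reroot_rev (rev x))"

lemma reroot_label_involution [simp]: "reroot_label (reroot_label x) = x"
  by (simp add: reroot_label_def)

lemma reroot_label_simps [simp]: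
  "reroot_label [] = [0]" "reroot_label [0] = []"
  "reroot_label [Suc j] = [j, 0]" "reroot_label [i, 0] = [Suc i]"
  by (simp_all add: reroot_label_def)

lemma reroot_label_Cons: "x \<noteq> [] \<Longrightarrow> x \<noteq> [0] \<Longrightarrow> reroot_label (i # x) = i # reroot_label x"
  by (simp add: reroot_label_def reroot_rev_snoc)

lemma reroot_label_eq_Nil_iff [simp]: "reroot_label x = [] \<longleftrightarrow> x = [0]"
  and reroot_label_eq_0_iff [simp]: "reroot_label x = [0] \<longleftrightarrow> x = []"
  by (metis reroot_label_involution reroot_label_simps(1,2))+

lemma inj_reroot_label: "inj reroot_label"
  by (metis injI reroot_label_involution)

definition reroot_edge :: "nat list \<Rightarrow> nat list" where
  "reroot_edge x = (if x = [] \<or> x = [0] then x else reroot_label x)"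

lemma reroot_edge_involution [simp]: "reroot_edge (reroot_edge x) = x"
  by (auto simp: reroot_edge_def)

lemma inj_reroot_edge: "inj reroot_edge"
  by (metis injI reroot_edge_involution)

definition reroot_offspring :: "(nat list \<Rightarrow> nat) \<Rightarrow> nat list \<Rightarrow> nat" where
  "reroot_offspring N x = N (reroot_label x)"

definition reroot_weights ::
    "(nat list \<Rightarrow> nat \<Rightarrow> nat \<Rightarrow> real) \<Rightarrow> nat list \<Rightarrow> nat \<Rightarrow> nat \<Rightarrow> real" where
  "reroot_weights Xi c = (if c = [0] then (\<lambda>k m. Xi [0] m k) else Xi (reroot_edge c))"

lemma cond_level_reroot:
  assumes "x \<noteq> []" "x \<noteq> [0]"
  shows "cond_level (reroot_offspring N) (reroot_weights Xi) n x = cond_level N Xi n (reroot_label x)"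
  using assms
proof (induction n arbitrary: x)
  case (Suc n)
  have "cond_level (reroot_offspring N) (reroot_weights Xi) n (i # x) = cond_level N Xi n (i # reroot_label x)" for i
    using Suc.IH[of "i # x"] Suc.prems by (simp add: reroot_label_Cons)
  moreover have "nchild (reroot_offspring N) x = nchild N (reroot_label x)"
    using Suc.prems by (simp add: nchild_def reroot_offspring_def)
  moreover have "cond_edge (reroot_offspring N) (reroot_weights Xi) (i # x) = cond_edge N Xi (i # reroot_label x)" for i
    using Suc.prems by (simp add: reroot_offspring_def reroot_weights_def reroot_edge_def reroot_label_Cons)
  ultimately show ?case
    using Suc.prems by (simp del: cond_edge.simps)
qed simp

lemma eff_cond_reroot:
  "x \<noteq> [] \<Longrightarrow> x \<noteq> [0] \<Longrightarrow>
   eff_cond (reroot_offspring N) (reroot_weights Xi) x = eff_cond N Xi (reroot_label x)"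
  by (simp add: eff_cond_def cond_level_reroot)

lemma xi0_reroot: "xi0 (reroot_offspring N) (reroot_weights Xi) = xi0 N Xi"
  by (simp add: xi0_def reroot_offspring_def reroot_weights_def)

lemma eff_cond_w0_reroot: "eff_cond (reroot_offspring N) (reroot_weights Xi) [0] = cond_others N Xi"
proof -
  have "eff_cond (reroot_offspring N) (reroot_weights Xi) [0] =
      (\<Sum>i<N []. ser (ennreal (cond_edge (reroot_offspring N) (reroot_weights Xi) [i, 0]))
                      (eff_cond (reroot_offspring N) (reroot_weights Xi) [i, 0]))"
    by (subst eff_cond_unfold) (simp add: nchild_def reroot_offspring_def)
  also have "\<dots> = cond_others N Xi"
    unfolding cond_others_def using eff_cond_reroot[of "[_, 0]" N Xi]
    by (intro sum.cong) (simp_all add: reroot_offspring_def reroot_weights_def reroot_edge_def)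
  finally show ?thesis .
qed

lemma cond_others_reroot: "cond_others (reroot_offspring N) (reroot_weights Xi) = eff_cond N Xi [0]"
proof -
  have "cond_others (reroot_offspring N) (reroot_weights Xi) =
      (\<Sum>i<N [0]. ser (ennreal (cond_edge N Xi [i, 0])) (eff_cond N Xi [i, 0]))"
    unfolding cond_others_def using eff_cond_reroot[of "[Suc _]" N Xi]
    by (intro sum.cong) (simp_all add: reroot_offspring_def reroot_weights_def reroot_edge_def)
  also have "\<dots> = eff_cond N Xi [0]"
    by (subst (2) eff_cond_unfold) (simp add: nchild_def)
  finally show ?thesis .
qed


section \<open>The augmented Galton--Watson measure\<close>

abbreviation xi0_at :: "(nat list \<Rightarrow> nat) \<times> (nat list \<Rightarrow> nat \<Rightarrow> nat \<Rightarrow> real) \<Rightarrow> real" where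
  "xi0_at \<omega> \<equiv> xi0 (fst \<omega>) (snd \<omega>)"

abbreviation cond_T0 :: "(nat list \<Rightarrow> nat) \<times> (nat list \<Rightarrow> nat \<Rightarrow> nat \<Rightarrow> real) \<Rightarrow> ennreal" where
  "cond_T0 \<omega> \<equiv> eff_cond (fst \<omega>) (snd \<omega>) [0]"

abbreviation cond_rest :: "(nat list \<Rightarrow> nat) \<times> (nat list \<Rightarrow> nat \<Rightarrow> nat \<Rightarrow> real) \<Rightarrow> ennreal" where
  "cond_rest \<omega> \<equiv> cond_others (fst \<omega>) (snd \<omega>)"

locale gw_model =
  fixes p :: "nat pmf" and \<mu> :: "nat \<Rightarrow> nat \<Rightarrow> real measure"
  assumes mu_prob: "\<And>k m. 1 \<le> k \<Longrightarrow> 1 \<le> m \<Longrightarrow> prob_space (\<mu> k m)"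
    and mu_borel: "\<And>k m. 1 \<le> k \<Longrightarrow> 1 \<le> m \<Longrightarrow> sets (\<mu> k m) = sets borel"
    and mu_pos: "\<And>k m. 1 \<le> k \<Longrightarrow> 1 \<le> m \<Longrightarrow> (AE x in \<mu> k m. 0 < x)"
    and mu_sym: "\<And>k m. 1 \<le> k \<Longrightarrow> 1 \<le> m \<Longrightarrow> \<mu> k m = \<mu> m k"
begin

lemma prob_space_mu_ext: "prob_space (mu_ext \<mu> k m)"
  by (auto simp: mu_ext_def mu_prob intro: prob_space_return)

lemma sets_mu_ext: "sets (mu_ext \<mu> k m) = sets borel"
  by (auto simp: mu_ext_def mu_borel)

lemma mu_ext_sym: "mu_ext \<mu> k m = mu_ext \<mu> m k"
  using mu_sym[of k m] by (auto simp: mu_ext_def)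

lemma AE_mu_ext_pos: "AE x in mu_ext \<mu> k m. 0 < x"
proof (cases "1 \<le> k \<and> 1 \<le> m")
  case False
  have "Measurable.pred borel (\<lambda>x::real. 0 < x)"
    by measurable
  then have "AE x in return borel (1::real). 0 < x"
    by (subst AE_return) simp_all
  with False show ?thesis
    unfolding mu_ext_def by (simp only: if_False)
qed (unfold mu_ext_def, use mu_pos[of k m] in simp)

definition weights_law :: "(nat \<Rightarrow> nat \<Rightarrow> real) measure" where
  "weights_law = PiM UNIV (\<lambda>k. PiM UNIV (\<lambda>m. mu_ext \<mu> k m))"

definition offspring_space :: "(nat list \<Rightarrow> nat) measure" where
  "offspring_space = PiM UNIV (\<lambda>_. measure_pmf p)"

definition weights_space :: "(nat list \<Rightarrow> nat \<Rightarrow> nat \<Rightarrow> real) measure" where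
  "weights_space = PiM UNIV (\<lambda>_. weights_law)"

lemma gw_space_eq: "gw_space p \<mu> = offspring_space \<Otimes>\<^sub>M weights_space"
  by (simp add: gw_space_def offspring_space_def weights_space_def weights_law_def)

lemma prob_space_weights_law: "prob_space weights_law"
  unfolding weights_law_def by (intro prob_space_PiM prob_space_mu_ext)

lemma prob_space_offspring_space: "prob_space offspring_space"
  unfolding offspring_space_def by (intro prob_space_PiM prob_space_measure_pmf)

lemma prob_space_weights_space: "prob_space weights_space"
  unfolding weights_space_def by (intro prob_space_PiM prob_space_weights_law)

lemma prob_space_gw_space: "prob_space (gw_space p \<mu>)"
  unfolding gw_space_eq
  using prob_space_offspring_space prob_space_weights_space by (intro prob_space_pair)

lemma measurable_offspring: "(\<lambda>N. N x) \<in> measurable offspring_space (count_space UNIV)"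
proof -
  have "(\<lambda>N. N x) \<in> measurable offspring_space (measure_pmf p)"
    unfolding offspring_space_def by (rule measurable_component_singleton) simp
  moreover have "measurable offspring_space (measure_pmf p) = measurable offspring_space (count_space UNIV)"
    by (rule measurable_cong_sets) (simp_all add: sets_measure_pmf_count_space)
  ultimately show ?thesis by simp
qed

lemma measurable_weight: "(\<lambda>Xi. Xi x k m) \<in> measurable weights_space (mu_ext \<mu> k m)"
proof -
  have "(\<lambda>Xi. Xi x) \<in> measurable weights_space weights_law"
    unfolding weights_space_def by (rule measurable_component_singleton) simp
  moreover have "(\<lambda>Y. Y k) \<in> measurable weights_law (PiM UNIV (\<lambda>m. mu_ext \<mu> k m))"
    unfolding weights_law_def by (rule measurable_component_singleton) simp
  moreover have "(\<lambda>Z. Z m) \<in> measurable (PiM UNIV (\<lambda>m. mu_ext \<mu> k m)) (mu_ext \<mu> k m)"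
    by (rule measurable_component_singleton) simp
  ultimately show ?thesis
    by (rule measurable_compose[OF measurable_compose])
qed

lemma borel_measurable_weight: "(\<lambda>Xi. Xi x k m) \<in> borel_measurable weights_space"
proof -
  have "measurable weights_space (mu_ext \<mu> k m) = measurable weights_space borel"
    by (rule measurable_cong_sets) (simp_all add: sets_mu_ext)
  then show ?thesis
    using measurable_weight[of x k m] by simp
qed

lemma random_weighted_tree_gw_space: "random_weighted_tree (gw_space p \<mu>) fst snd"
  unfolding gw_space_eq
  by (rule random_weighted_tree.intro)
     (auto intro: measurable_compose[OF measurable_fst measurable_offspring]
                  measurable_compose[OF measurable_snd borel_measurable_weight])

lemma random_weighted_tree_weights_space: "random_weighted_tree weights_space (\<lambda>_. N) (\<lambda>Xi. Xi)"
  by (rule random_weighted_tree.intro) (auto simp: borel_measurable_weight)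

lemma measurable_reroot_offspring: "reroot_offspring \<in> measurable offspring_space offspring_space"
  unfolding reroot_offspring_def[abs_def]
  by (subst (2) offspring_space_def) (intro measurable_PiM_UNIV_I, simp add: offspring_space_def)

lemma distr_reroot_offspring: "distr offspring_space offspring_space reroot_offspring = offspring_space"
proof -
  have "(\<lambda>N. \<lambda>x\<in>UNIV. N (reroot_label x)) = reroot_offspring"
    by (simp add: reroot_offspring_def fun_eq_iff)
  then show ?thesis
    using distr_PiM_reindex[of UNIV "\<lambda>_. measure_pmf p" reroot_label UNIV] inj_reroot_label
    by (simp add: offspring_space_def prob_space_measure_pmf)
qed

lemma
  shows measurable_reroot_weights: "reroot_weights \<in> measurable weights_space weights_space"
    and distr_reroot_weights: "distr weights_space weights_space reroot_weights = weights_space"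
proof -
  define relabel where "relabel Xi c = Xi (reroot_edge c)" for Xi :: "nat list \<Rightarrow> nat \<Rightarrow> nat \<Rightarrow> real" and c
  define flip where "flip c Y = (if c = [0] then (\<lambda>k m. Y m k) else Y)" for c :: "nat list" and Y :: "nat \<Rightarrow> nat \<Rightarrow> real"
  define flip_w0 where "flip_w0 Xi c = flip c (Xi c)" for Xi :: "nat list \<Rightarrow> nat \<Rightarrow> nat \<Rightarrow> real" and c
  have decomp: "reroot_weights = flip_w0 \<circ> relabel"
    by (simp add: fun_eq_iff reroot_weights_def flip_w0_def flip_def relabel_def reroot_edge_def)
  have transpose: "(\<lambda>Y k m. Y m k) \<in> measurable weights_law weights_law"
    "distr weights_law weights_law (\<lambda>Y k m. Y m k) = weights_law"
    unfolding weights_law_def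
    by (rule measurable_transpose[where \<nu>="mu_ext \<mu>", OF mu_ext_sym],
        rule distr_PiM_transpose[where \<nu>="mu_ext \<mu>", OF prob_space_mu_ext mu_ext_sym])
  have flip_cases: "flip c = (\<lambda>Y k m. Y m k) \<or> flip c = (\<lambda>Y. Y)" for c
    by (simp add: flip_def fun_eq_iff)
  have flip: "flip c \<in> measurable weights_law weights_law"
    and flip_distr: "distr weights_law weights_law (flip c) = weights_law" for c
    using flip_cases[of c] transpose by (elim disjE; simp)+
  have weight_vertex: "(\<lambda>Xi. Xi c) \<in> measurable weights_space weights_law" for c
    unfolding weights_space_def by (rule measurable_component_singleton) simp
  have relabel: "relabel \<in> measurable weights_space weights_space"
    using weight_vertex unfolding relabel_def[abs_def]
    by (subst (2) weights_space_def) (intro measurable_PiM_UNIV_I)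
  have flip_w0: "flip_w0 \<in> measurable weights_space weights_space"
    using measurable_compose[OF weight_vertex flip] unfolding flip_w0_def[abs_def]
    by (subst (2) weights_space_def) (intro measurable_PiM_UNIV_I)
  have "distr weights_space weights_space relabel = weights_space"
  proof -
    have "(\<lambda>Xi. \<lambda>c\<in>UNIV. Xi (reroot_edge c)) = relabel"
      by (simp add: relabel_def fun_eq_iff)
    then show ?thesis
      using distr_PiM_reindex[of UNIV "\<lambda>_. weights_law" reroot_edge UNIV] inj_reroot_edge prob_space_weights_law
      by (simp add: weights_space_def)
  qed
  moreover have "distr weights_space weights_space flip_w0 = weights_space"
  proof -
    have "(\<lambda>Xi. \<lambda>c\<in>UNIV. flip c (Xi c)) = flip_w0"
      by (simp add: flip_w0_def fun_eq_iff)
    then show ?thesis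
      using distr_PiM_componentwise[of UNIV "\<lambda>_. weights_law" flip] prob_space_weights_law flip flip_distr
      by (simp add: weights_space_def)
  qed
  ultimately show "distr weights_space weights_space reroot_weights = weights_space"
    by (simp only: decomp distr_distr[OF flip_w0 relabel, symmetric])
  show "reroot_weights \<in> measurable weights_space weights_space"
    unfolding decomp using relabel flip_w0 by (rule measurable_comp)
qed

definition reroot :: "(nat list \<Rightarrow> nat) \<times> (nat list \<Rightarrow> nat \<Rightarrow> nat \<Rightarrow> real)
    \<Rightarrow> (nat list \<Rightarrow> nat) \<times> (nat list \<Rightarrow> nat \<Rightarrow> nat \<Rightarrow> real)" where
  "reroot \<omega> = (reroot_offspring (fst \<omega>), reroot_weights (snd \<omega>))"

lemma measurable_reroot: "reroot \<in> measurable (gw_space p \<mu>) (gw_space p \<mu>)"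
  unfolding gw_space_eq reroot_def
  by (intro measurable_Pair measurable_compose[OF measurable_fst measurable_reroot_offspring]
      measurable_compose[OF measurable_snd measurable_reroot_weights])

lemma distr_reroot: "distr (gw_space p \<mu>) (gw_space p \<mu>) reroot = gw_space p \<mu>"
proof -
  interpret W: prob_space weights_space
    by (rule prob_space_weights_space)
  have "reroot = (\<lambda>(N, Xi). (reroot_offspring N, reroot_weights Xi))"
    by (simp add: reroot_def fun_eq_iff)
  moreover have "distr offspring_space offspring_space reroot_offspring \<Otimes>\<^sub>M distr weights_space weights_space reroot_weights
      = distr (offspring_space \<Otimes>\<^sub>M weights_space) (offspring_space \<Otimes>\<^sub>M weights_space)
          (\<lambda>(N, Xi). (reroot_offspring N, reroot_weights Xi))"
    by (rule pair_measure_distr[OF measurable_reroot_offspring measurable_reroot_weights])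
       (simp add: distr_reroot_weights W.sigma_finite_measure_axioms)
  ultimately show ?thesis
    by (simp only: gw_space_eq distr_reroot_offspring distr_reroot_weights)
qed

lemma nn_integral_reroot:
  assumes "f \<in> borel_measurable (gw_space p \<mu>)"
  shows "(\<integral>\<^sup>+\<omega>. f (reroot \<omega>) \<partial>gw_space p \<mu>) = (\<integral>\<^sup>+\<omega>. f \<omega> \<partial>gw_space p \<mu>)"
  using nn_integral_distr[OF measurable_reroot, of f] assms by (simp add: distr_reroot)

lemma nn_integral_gw_space:
  assumes "(\<lambda>\<omega>. h (fst \<omega>) (snd \<omega>)) \<in> borel_measurable (gw_space p \<mu>)"
  shows "(\<integral>\<^sup>+\<omega>. h (fst \<omega>) (snd \<omega>) \<partial>gw_space p \<mu>) = (\<integral>\<^sup>+N. \<integral>\<^sup>+Xi. h N Xi \<partial>weights_space \<partial>offspring_space)"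
proof -
  interpret W: prob_space weights_space
    by (rule prob_space_weights_space)
  show ?thesis
    using W.nn_integral_fst[of "\<lambda>\<omega>. h (fst \<omega>) (snd \<omega>)" offspring_space] assms
    by (simp add: gw_space_eq)
qed

lemma nn_integral_weight: "(\<integral>\<^sup>+Xi. ennreal (Xi c k m) \<partial>weights_space) = gamma_km (mu_ext \<mu>) k m"
proof -
  have "measurable (mu_ext \<mu> k m) (borel :: ennreal measure) = measurable borel borel"
    by (rule measurable_cong_sets) (simp_all add: sets_mu_ext)
  then have ennreal_mu_ext: "(\<lambda>x. ennreal x) \<in> borel_measurable (mu_ext \<mu> k m)"
    by simp
  have row: "(\<lambda>Z. ennreal (Z m)) \<in> borel_measurable (PiM UNIV (mu_ext \<mu> k))"
    by (rule measurable_compose[OF measurable_component_singleton[of m UNIV "mu_ext \<mu> k"] ennreal_mu_ext]) simp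
  have entry: "(\<lambda>Y. ennreal (Y k m)) \<in> borel_measurable weights_law"
    unfolding weights_law_def
    by (rule measurable_compose[OF measurable_component_singleton[of k UNIV "\<lambda>k. PiM UNIV (mu_ext \<mu> k)"] row]) simp
  have "(\<integral>\<^sup>+Xi. ennreal (Xi c k m) \<partial>weights_space) = (\<integral>\<^sup>+Y. ennreal (Y k m) \<partial>weights_law)"
    unfolding weights_space_def by (rule nn_integral_PiM_component[OF prob_space_weights_law entry])
  also have "\<dots> = (\<integral>\<^sup>+Z. ennreal (Z m) \<partial>PiM UNIV (mu_ext \<mu> k))"
    unfolding weights_law_def
    by (rule nn_integral_PiM_component[where M="\<lambda>k. PiM UNIV (mu_ext \<mu> k)" and i=k, OF _ row])
       (intro prob_space_PiM prob_space_mu_ext)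
  also have "\<dots> = gamma_km (mu_ext \<mu>) k m"
    unfolding gamma_km_def
    by (rule nn_integral_PiM_component[where M="mu_ext \<mu> k" and i=m, OF prob_space_mu_ext ennreal_mu_ext])
  finally show ?thesis .
qed

lemma nn_integral_xi0:
  assumes p0: "pmf p 0 = 0"
  shows "(\<integral>\<^sup>+\<omega>. ennreal (xi0_at \<omega>) \<partial>gw_space p \<mu>) = gamma_tot p \<mu>"
proof -
  interpret T: random_weighted_tree "gw_space p \<mu>" fst snd
    by (rule random_weighted_tree_gw_space)
  let ?pp = "measure_pmf p \<Otimes>\<^sub>M measure_pmf p"
  have "sets ?pp = sets (count_space (UNIV :: nat set) \<Otimes>\<^sub>M count_space (UNIV :: nat set))"
    by (intro sets_pair_measure_cong) (simp_all add: sets_measure_pmf_count_space)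
  also have "\<dots> = sets (count_space (UNIV \<times> UNIV))"
    by (subst pair_measure_countable) auto
  finally have sets_pp: "sets ?pp = sets (count_space UNIV)"
    by simp
  have measurable_pp: "f \<in> borel_measurable ?pp" for f :: "nat \<times> nat \<Rightarrow> ennreal"
    by (subst measurable_cong_sets[OF sets_pp refl]) simp
  have root_w0: "(\<lambda>N. (N [], N [0])) \<in> measurable offspring_space ?pp"
    unfolding offspring_space_def by (intro measurable_Pair measurable_component_singleton) auto
  have shift: "(\<Sum>n. f n) = (\<Sum>n. f (Suc n))" if "f 0 = 0" for f :: "nat \<Rightarrow> ennreal"
    using suminf_offset[of f 1] that by simp
  have "(\<integral>\<^sup>+\<omega>. ennreal (xi0_at \<omega>) \<partial>gw_space p \<mu>)
      = (\<integral>\<^sup>+N. gamma_km (mu_ext \<mu>) (N []) (N [0]) \<partial>offspring_space)"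
    using nn_integral_gw_space[of "\<lambda>N Xi. ennreal (xi0 N Xi)"] measurable_compose[OF T.borel_measurable_xi0 measurable_ennreal]
    by (simp add: xi0_def nn_integral_weight)
  also have "\<dots> = (\<integral>\<^sup>+z. gamma_km (mu_ext \<mu>) (fst z) (snd z) \<partial>?pp)"
  proof -
    have "distr offspring_space ?pp (\<lambda>N. (N [], N [0])) = ?pp"
      unfolding offspring_space_def by (rule distr_PiM_two_components) (auto simp: prob_space_measure_pmf)
    then show ?thesis
      using nn_integral_distr[OF root_w0, of "\<lambda>z. gamma_km (mu_ext \<mu>) (fst z) (snd z)"] measurable_pp
      by simp
  qed
  also have "\<dots> = (\<Sum>k. ennreal (pmf p k) * (\<Sum>m. ennreal (pmf p m) * gamma_km (mu_ext \<mu>) k m))"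
    using measure_pmf.nn_integral_fst[OF measurable_pp, of "\<lambda>z. gamma_km (mu_ext \<mu>) (fst z) (snd z)"]
    by (simp add: nn_integral_measure_pmf nn_integral_count_space_nat)
  also have "\<dots> = (\<Sum>k. ennreal (pmf p (Suc k)) * (\<Sum>m. ennreal (pmf p (Suc m)) * gamma_km (mu_ext \<mu>) (Suc k) (Suc m)))"
    using p0 by (simp add: shift[of "\<lambda>k. ennreal (pmf p k) * _ k"] shift[of "\<lambda>m. ennreal (pmf p m) * _ m"])
  also have "\<dots> = gamma_tot p \<mu>"
    unfolding gamma_tot_def
    by (intro suminf_cong) (simp add: gamma_km_def mu_ext_def ennreal_mult mult.assoc)
  finally show ?thesis .
qed

lemma AE_weight_pos: "AE Xi in weights_space. 0 < Xi x k m"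
proof -
  have "AE Z in PiM UNIV (mu_ext \<mu> k). 0 < Z m"
    by (rule AE_PiM_component[OF prob_space_mu_ext _ AE_mu_ext_pos]) auto
  then have "AE Y in weights_law. 0 < Y k m"
    unfolding weights_law_def
    by (intro AE_PiM_component[where P="\<lambda>Z. 0 < Z m"]) (auto intro: prob_space_PiM prob_space_mu_ext)
  then show ?thesis
    unfolding weights_space_def
    by (intro AE_PiM_component[where P="\<lambda>Y. 0 < Y k m"]) (auto intro: prob_space_weights_law)
qed

lemma AE_xi0_pos: "AE \<omega> in gw_space p \<mu>. 0 < xi0_at \<omega>"
proof -
  interpret O: prob_space offspring_space
    by (rule prob_space_offspring_space)
  interpret W: prob_space weights_space
    by (rule prob_space_weights_space)
  interpret OW: pair_prob_space offspring_space weights_space ..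
  interpret T: random_weighted_tree "gw_space p \<mu>" fst snd
    by (rule random_weighted_tree_gw_space)
  have "{\<omega> \<in> space (offspring_space \<Otimes>\<^sub>M weights_space). 0 < xi0_at \<omega>}
      \<in> sets (offspring_space \<Otimes>\<^sub>M weights_space)"
    using T.borel_measurable_xi0 unfolding gw_space_eq by measurable
  moreover have "AE Xi in weights_space. 0 < xi0 N Xi" for N
  proof -
    have "AE Xi in weights_space. \<forall>k m. 0 < Xi [0] k m"
      by (simp add: AE_all_countable AE_weight_pos)
    then show ?thesis
      by eventually_elim (simp add: xi0_def)
  qed
  ultimately show ?thesis
    unfolding gw_space_eq by (intro OW.AE_pair_measure) auto
qed

lemma nn_integral_weights_branches_indep:
  assumes u: "u \<in> borel_measurable borel" and v: "v \<in> borel_measurable borel"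
  shows "(\<integral>\<^sup>+Xi. u (eff_cond N Xi [0]) * v (cond_others N Xi) \<partial>weights_space)
       = (\<integral>\<^sup>+Xi. u (eff_cond N Xi [0]) \<partial>weights_space) * (\<integral>\<^sup>+Xi. v (cond_others N Xi) \<partial>weights_space)"
  unfolding weights_space_def
proof (rule nn_integral_PiM_mult_disjoint[where S=verts_T0 and S'=verts_others])
  interpret T: random_weighted_tree weights_space "\<lambda>_. N" "\<lambda>Xi. Xi"
    by (rule random_weighted_tree_weights_space)
  show "(\<lambda>Xi. u (eff_cond N Xi [0])) \<in> borel_measurable (PiM UNIV (\<lambda>_. weights_law))"
    "(\<lambda>Xi. v (cond_others N Xi)) \<in> borel_measurable (PiM UNIV (\<lambda>_. weights_law))"
    using measurable_compose[OF T.borel_measurable_eff_cond u] measurable_compose[OF T.borel_measurable_cond_others v]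
    by (simp_all add: weights_space_def)
  fix Xi Xi' :: "nat list \<Rightarrow> nat \<Rightarrow> nat \<Rightarrow> real"
  show "(\<And>i. i \<in> verts_T0 \<Longrightarrow> Xi i = Xi' i) \<Longrightarrow> u (eff_cond N Xi [0]) = u (eff_cond N Xi' [0])"
    by (subst eff_cond_w0_cong[of N N Xi Xi']) auto
  show "(\<And>i. i \<in> verts_others \<Longrightarrow> Xi i = Xi' i) \<Longrightarrow> v (cond_others N Xi) = v (cond_others N Xi')"
    by (subst cond_others_cong[of N N Xi Xi']) auto
qed (auto simp: prob_space_weights_law verts_T0_others_disjoint)

text \<open>The root's own offspring number enters only the second factor.\<close>

lemma nn_integral_branches_indep:
  assumes u: "u \<in> borel_measurable borel" and v: "v \<in> borel_measurable borel"
  shows "(\<integral>\<^sup>+\<omega>. u (cond_T0 \<omega>) * v (cond_rest \<omega>) \<partial>gw_space p \<mu>)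
       = (\<integral>\<^sup>+\<omega>. u (cond_T0 \<omega>) \<partial>gw_space p \<mu>) * (\<integral>\<^sup>+\<omega>. v (cond_rest \<omega>) \<partial>gw_space p \<mu>)"
proof -
  interpret W: prob_space weights_space
    by (rule prob_space_weights_space)
  interpret T: random_weighted_tree "gw_space p \<mu>" fst snd
    by (rule random_weighted_tree_gw_space)
  have f: "(\<lambda>\<omega>. u (cond_T0 \<omega>)) \<in> borel_measurable (gw_space p \<mu>)"
    by (rule measurable_compose[OF T.borel_measurable_eff_cond u])
  have g: "(\<lambda>\<omega>. v (cond_rest \<omega>)) \<in> borel_measurable (gw_space p \<mu>)"
    by (rule measurable_compose[OF T.borel_measurable_cond_others v])
  define F where "F N = (\<integral>\<^sup>+Xi. u (eff_cond N Xi [0]) \<partial>weights_space)" for N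
  define G where "G N = (\<integral>\<^sup>+Xi. v (cond_others N Xi) \<partial>weights_space)" for N
  have F: "F \<in> borel_measurable offspring_space" and G: "G \<in> borel_measurable offspring_space"
    unfolding F_def G_def using W.borel_measurable_nn_integral_fst f g by (simp_all add: gw_space_eq)
  have outer: "(\<integral>\<^sup>+N. F N * G N \<partial>offspring_space) = (\<integral>\<^sup>+N. F N \<partial>offspring_space) * (\<integral>\<^sup>+N. G N \<partial>offspring_space)"
    unfolding offspring_space_def
  proof (rule nn_integral_PiM_mult_disjoint[where S=verts_T0 and S'="insert [] verts_others"])
    show "F \<in> borel_measurable (PiM UNIV (\<lambda>_. measure_pmf p))" "G \<in> borel_measurable (PiM UNIV (\<lambda>_. measure_pmf p))"
      using F G by (simp_all add: offspring_space_def)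
    show "verts_T0 \<inter> insert [] verts_others = {}"
      using verts_T0_others_disjoint by (auto simp: verts_T0_def)
    fix N N' :: "nat list \<Rightarrow> nat"
    show "(\<And>i. i \<in> verts_T0 \<Longrightarrow> N i = N' i) \<Longrightarrow> F N = F N'"
      unfolding F_def by (intro nn_integral_cong) (subst eff_cond_w0_cong[of N N']; auto)
    show "(\<And>i. i \<in> insert [] verts_others \<Longrightarrow> N i = N' i) \<Longrightarrow> G N = G N'"
      unfolding G_def by (intro nn_integral_cong) (subst cond_others_cong[of N N']; auto)
  qed (auto simp: prob_space_measure_pmf)
  have "(\<integral>\<^sup>+\<omega>. u (cond_T0 \<omega>) * v (cond_rest \<omega>) \<partial>gw_space p \<mu>) = (\<integral>\<^sup>+N. F N * G N \<partial>offspring_space)"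
    using nn_integral_gw_space[of "\<lambda>N Xi. u (eff_cond N Xi [0]) * v (cond_others N Xi)"]
      borel_measurable_times_ennreal[OF f g]
    by (simp add: nn_integral_weights_branches_indep[OF u v] F_def G_def)
  also have "\<dots> = (\<integral>\<^sup>+\<omega>. u (cond_T0 \<omega>) \<partial>gw_space p \<mu>) * (\<integral>\<^sup>+\<omega>. v (cond_rest \<omega>) \<partial>gw_space p \<mu>)"
    using outer nn_integral_gw_space[of "\<lambda>N Xi. u (eff_cond N Xi [0])"] f
      nn_integral_gw_space[of "\<lambda>N Xi. v (cond_others N Xi)"] g
    by (simp add: F_def G_def)
  finally show ?thesis .
qed

lemma key_expect_eq:
  "key_expect p \<mu> = (\<integral>\<^sup>+\<omega>. edge_share (xi0_at \<omega>)
      (cond_T0 \<omega>) (cond_rest \<omega>) \<partial>gw_space p \<mu>)"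
  unfolding key_expect_def by (simp add: edge_share_eq_C_T)

lemma key_expect_eq_swapped:
  "key_expect p \<mu> = (\<integral>\<^sup>+\<omega>. edge_share (xi0_at \<omega>)
      (cond_rest \<omega>) (cond_T0 \<omega>) \<partial>gw_space p \<mu>)"
proof -
  interpret T: random_weighted_tree "gw_space p \<mu>" fst snd
    by (rule random_weighted_tree_gw_space)
  define F where "F \<omega> = edge_share (xi0_at \<omega>) (cond_T0 \<omega>) (cond_rest \<omega>)" for \<omega>
  have "F \<in> borel_measurable (gw_space p \<mu>)"
    unfolding F_def by (intro borel_measurable_edge_share T.borel_measurable_xi0 T.borel_measurable_eff_cond
        T.borel_measurable_cond_others)
  have "key_expect p \<mu> = (\<integral>\<^sup>+\<omega>. F \<omega> \<partial>gw_space p \<mu>)"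
    unfolding F_def by (rule key_expect_eq)
  also have "\<dots> = (\<integral>\<^sup>+\<omega>. F (reroot \<omega>) \<partial>gw_space p \<mu>)"
    by (rule nn_integral_reroot[symmetric]) fact
  finally show ?thesis
    by (simp add: F_def reroot_def xi0_reroot eff_cond_w0_reroot cond_others_reroot)
qed

lemma not_AE_exactly_one_branch_zero:
  "\<not> (AE \<omega> in gw_space p \<mu>. (cond_T0 \<omega> = 0) \<noteq> (cond_rest \<omega> = 0))"
proof
  assume AE: "AE \<omega> in gw_space p \<mu>. (cond_T0 \<omega> = 0) \<noteq> (cond_rest \<omega> = 0)"
  interpret G: prob_space "gw_space p \<mu>"
    by (rule prob_space_gw_space)
  interpret T: random_weighted_tree "gw_space p \<mu>" fst snd
    by (rule random_weighted_tree_gw_space)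
  define z :: "ennreal \<Rightarrow> ennreal" where "z = indicator {0}"
  have z: "z \<in> borel_measurable borel"
    unfolding z_def by (rule borel_measurable_indicator) simp
  define a where "a \<omega> = z (cond_T0 \<omega>)" for \<omega>
  define b where "b \<omega> = z (cond_rest \<omega>)" for \<omega>
  have a: "a \<in> borel_measurable (gw_space p \<mu>)" and b: "b \<in> borel_measurable (gw_space p \<mu>)"
    unfolding a_def b_def
    by (rule measurable_compose[OF T.borel_measurable_eff_cond z],
        rule measurable_compose[OF T.borel_measurable_cond_others z])
  have same_law: "(\<integral>\<^sup>+\<omega>. b \<omega> \<partial>gw_space p \<mu>) = (\<integral>\<^sup>+\<omega>. a \<omega> \<partial>gw_space p \<mu>)"
    using nn_integral_reroot[OF a] by (simp add: a_def b_def reroot_def eff_cond_w0_reroot)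
  have "(\<integral>\<^sup>+\<omega>. a \<omega> \<partial>gw_space p \<mu>) * (\<integral>\<^sup>+\<omega>. b \<omega> \<partial>gw_space p \<mu>) = (\<integral>\<^sup>+\<omega>. a \<omega> * b \<omega> \<partial>gw_space p \<mu>)"
    unfolding a_def b_def by (rule nn_integral_branches_indep[OF z z, symmetric])
  also have "\<dots> = (\<integral>\<^sup>+\<omega>. 0 \<partial>gw_space p \<mu>)"
    using AE by (intro nn_integral_cong_AE) (auto elim!: AE_mp simp: a_def b_def z_def)
  finally have a0: "(\<integral>\<^sup>+\<omega>. a \<omega> \<partial>gw_space p \<mu>) = 0"
    using same_law by simp
  have "(\<integral>\<^sup>+\<omega>. a \<omega> \<partial>gw_space p \<mu>) + (\<integral>\<^sup>+\<omega>. b \<omega> \<partial>gw_space p \<mu>) = (\<integral>\<^sup>+\<omega>. a \<omega> + b \<omega> \<partial>gw_space p \<mu>)"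
    using a b by (simp add: nn_integral_add)
  also have "\<dots> = (\<integral>\<^sup>+\<omega>. 1 \<partial>gw_space p \<mu>)"
    using AE by (intro nn_integral_cong_AE) (auto elim!: AE_mp simp: a_def b_def z_def)
  finally show False
    using a0 same_law G.emeasure_space_1 by simp
qed

lemma not_AE_xi0_le_edge_share_swap:
  "\<not> (AE \<omega> in gw_space p \<mu>. ennreal (xi0_at \<omega>)
        \<le> edge_share (xi0_at \<omega>) (cond_T0 \<omega>) (cond_rest \<omega>) + edge_share (xi0_at \<omega>) (cond_rest \<omega>) (cond_T0 \<omega>))"
proof
  assume "AE \<omega> in gw_space p \<mu>. ennreal (xi0_at \<omega>)
        \<le> edge_share (xi0_at \<omega>) (cond_T0 \<omega>) (cond_rest \<omega>) + edge_share (xi0_at \<omega>) (cond_rest \<omega>) (cond_T0 \<omega>)"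
  then have "AE \<omega> in gw_space p \<mu>. (cond_T0 \<omega> = 0) \<noteq> (cond_rest \<omega> = 0)"
    using AE_xi0_pos
  proof eventually_elim
    case (elim \<omega>)
    show ?case
    proof
      assume "(cond_T0 \<omega> = 0) = (cond_rest \<omega> = 0)"
      with elim(2) have "edge_share (xi0_at \<omega>) (cond_T0 \<omega>) (cond_rest \<omega>)
          + edge_share (xi0_at \<omega>) (cond_rest \<omega>) (cond_T0 \<omega>) < ennreal (xi0_at \<omega>)"
        by (intro edge_share_swap_less eff_cond_less_top cond_others_less_top)
      with elim(1) show False by simp
    qed
  qed
  with not_AE_exactly_one_branch_zero show False ..
qed

lemma key_expect_twice_less:
  assumes p0: "pmf p 0 = 0" and gamma_fin: "gamma_tot p \<mu> < top"
  shows "key_expect p \<mu> + key_expect p \<mu> < gamma_tot p \<mu>"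
proof -
  interpret T: random_weighted_tree "gw_space p \<mu>" fst snd
    by (rule random_weighted_tree_gw_space)
  let ?G = "gw_space p \<mu>"
  define X where "X \<omega> = ennreal (xi0_at \<omega>)" for \<omega>
  define F where "F \<omega> = edge_share (xi0_at \<omega>) (cond_T0 \<omega>) (cond_rest \<omega>)" for \<omega>
  define H where "H \<omega> = edge_share (xi0_at \<omega>) (cond_rest \<omega>) (cond_T0 \<omega>)" for \<omega>
  have X: "X \<in> borel_measurable ?G"
    unfolding X_def by (rule measurable_compose[OF T.borel_measurable_xi0 measurable_ennreal])
  have F: "F \<in> borel_measurable ?G" and H: "H \<in> borel_measurable ?G"
    unfolding F_def H_def
    by (intro borel_measurable_edge_share T.borel_measurable_xi0 T.borel_measurable_eff_cond
        T.borel_measurable_cond_others)+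
  have "key_expect p \<mu> = (\<integral>\<^sup>+\<omega>. F \<omega> \<partial>?G)"
    unfolding F_def by (rule key_expect_eq)
  moreover have "key_expect p \<mu> = (\<integral>\<^sup>+\<omega>. H \<omega> \<partial>?G)"
    unfolding H_def by (rule key_expect_eq_swapped)
  ultimately have sum: "key_expect p \<mu> + key_expect p \<mu> = (\<integral>\<^sup>+\<omega>. F \<omega> + H \<omega> \<partial>?G)"
    by (simp only: nn_integral_add[OF F H])
  have le: "F \<omega> + H \<omega> \<le> X \<omega>" for \<omega>
    unfolding F_def H_def X_def by (rule edge_share_swap_le[OF eff_cond_less_top cond_others_less_top])
  have X_integral: "(\<integral>\<^sup>+\<omega>. X \<omega> \<partial>?G) = gamma_tot p \<mu>"
    unfolding X_def by (rule nn_integral_xi0[OF p0])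
  have "(\<integral>\<^sup>+\<omega>. F \<omega> + H \<omega> \<partial>?G) \<le> (\<integral>\<^sup>+\<omega>. X \<omega> \<partial>?G)"
    by (intro nn_integral_mono le)
  then have "(\<integral>\<^sup>+\<omega>. F \<omega> + H \<omega> \<partial>?G) \<noteq> \<infinity>"
    using gamma_fin X_integral by (auto simp: top_unique)
  then have "(\<integral>\<^sup>+\<omega>. F \<omega> + H \<omega> \<partial>?G) < (\<integral>\<^sup>+\<omega>. X \<omega> \<partial>?G)"
    using le not_AE_xi0_le_edge_share_swap unfolding F_def H_def X_def
    by (intro nn_integral_less[OF borel_measurable_add[OF F H] X, unfolded F_def H_def X_def]) simp_all
  then show ?thesis
    using sum X_integral by simp
qed

end

theorem theorem4p3:
  fixes p :: "nat pmf" and \<mu> :: "nat \<Rightarrow> nat \<Rightarrow> real measure"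
  assumes p0: "pmf p 0 = 0"
    and mean_fin: "summable (\<lambda>j. real j * pmf p j)"
    and mean_gt1: "1 < (\<Sum>j. real j * pmf p j)"
    and mu_prob: "\<And>k m. 1 \<le> k \<Longrightarrow> 1 \<le> m \<Longrightarrow> prob_space (\<mu> k m)"
    and mu_borel: "\<And>k m. 1 \<le> k \<Longrightarrow> 1 \<le> m \<Longrightarrow> sets (\<mu> k m) = sets borel"
    and mu_pos: "\<And>k m. 1 \<le> k \<Longrightarrow> 1 \<le> m \<Longrightarrow> (AE x in \<mu> k m. 0 < x)"
    and mu_sym: "\<And>k m. 1 \<le> k \<Longrightarrow> 1 \<le> m \<Longrightarrow> \<mu> k m = \<mu> m k"
    and gamma_fin: "gamma_tot p \<mu> < \<top>"
  shows "key_expect p \<mu> < \<top> \<and> 0 < speed_v p \<mu>"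
proof -
  interpret gw_model p \<mu>
    by (rule gw_model.intro) (simp_all add: mu_prob mu_borel mu_pos mu_sym)
  have "key_expect p \<mu> + key_expect p \<mu> < gamma_tot p \<mu>"
    by (rule key_expect_twice_less[OF p0 gamma_fin])
  then show ?thesis
    unfolding speed_v_def using gamma_fin by (rule one_sub_two_ratio_pos)
qed

end
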